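(* Let $G$ be a connected graph with vertex set $\{u_1,\dots,u_m\}$, $m\ge2$, and $\kappa(G)=\delta(G)>0$, and let $n\ge3$. Let $S\subseteq V(G\times K_n)$ with $|S|=(n-1)\delta(G)$ such that $S_i\subseteq S$ for some $i\in\{1,\dots,m\}$. Then $G\times K_n-S$ is connected.
   Context: The Kronecker product $G_1\times G_2$ has vertex set $V(G_1)\times V(G_2)$, with $(u_1,v_1)(u_2,v_2)$ an edge iff $u_1u_2\in E(G_1)$ and $v_1v_2\in E(G_2)$. $K_n$ is the complete graph with $V(K_n)=\{v_1,\dots,v_n\}$, and $S_i=\{u_i\}\times V(K_n)$ for $i=1,\dots,m$. $\kappa$ denotes vertex connectivity and $\delta$ minimum degree. *)

theory Defs
  imports Main
begin

definition simple_graph :: "'a set \<Rightarrow> ('a \<Rightarrow> 'a \<Rightarrow> bool) \<Rightarrow> bool" where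
  "simple_graph V E \<longleftrightarrow> finite V \<and> (\<forall>x y. E x y \<longrightarrow> x \<in> V \<and> y \<in> V)
     \<and> (\<forall>x y. E x y \<longrightarrow> E y x) \<and> (\<forall>x. \<not> E x x)"

text \<open>The subgraph induced on V (so G - S is the graph on V - S) is connected:
nonempty, and any two vertices are joined by a walk inside V.\<close>
definition connected_on :: "'a set \<Rightarrow> ('a \<Rightarrow> 'a \<Rightarrow> bool) \<Rightarrow> bool" where
  "connected_on V E \<longleftrightarrow> V \<noteq> {} \<and>
     (\<forall>x\<in>V. \<forall>y\<in>V. (\<lambda>a b. E a b \<and> a \<in> V \<and> b \<in> V)\<^sup>*\<^sup>* x y)"

definition degree :: "'a set \<Rightarrow> ('a \<Rightarrow> 'a \<Rightarrow> bool) \<Rightarrow> 'a \<Rightarrow> nat" where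
  "degree V E v = card {u \<in> V. E v u}"

definition min_degree :: "'a set \<Rightarrow> ('a \<Rightarrow> 'a \<Rightarrow> bool) \<Rightarrow> nat" where
  "min_degree V E = Min (degree V E ` V)"

definition vertex_connectivity :: "'a set \<Rightarrow> ('a \<Rightarrow> 'a \<Rightarrow> bool) \<Rightarrow> nat" where
  "vertex_connectivity V E =
     Min {card S | S. S \<subseteq> V \<and> (\<not> connected_on (V - S) E \<or> card (V - S) \<le> 1)}"

definition kron_edges ::
  "('a \<Rightarrow> 'a \<Rightarrow> bool) \<Rightarrow> ('b \<Rightarrow> 'b \<Rightarrow> bool) \<Rightarrow> ('a \<times> 'b) \<Rightarrow> ('a \<times> 'b) \<Rightarrow> bool" where
  "kron_edges E1 E2 x y \<longleftrightarrow> E1 (fst x) (fst y) \<and> E2 (snd x) (snd y)"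

text \<open>Complete graph K_n on vertex set {1..n} (vertex v_j is represented by j).\<close>
definition K_vertices :: "nat \<Rightarrow> nat set" where
  "K_vertices n = {1..n}"

definition K_edges :: "nat \<Rightarrow> nat \<Rightarrow> nat \<Rightarrow> bool" where
  "K_edges n x y \<longleftrightarrow> x \<in> {1..n} \<and> y \<in> {1..n} \<and> x \<noteq> y"

end

theory Submission
  imports Defs
begin

(* Let R = V(G x K_n) - S and write F(u) = {j. (u,j) \<in> R} for the fibre of
   colours surviving above a vertex u of G.  Call u poor if |F(u)| \<le> 1 and
   rich otherwise, and let P be the set of poor vertices.

   Counting: a poor vertex costs at least n-1 elements of S and the vertex
   u_i with S_i \<subseteq> S costs n, so (n-1)|P| < |S| = (n-1)\<delta> and |P| < \<delta> = \<kappa>.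
   Hence Q = V - P induces a connected subgraph, and since every degree is at
   least \<delta>, every vertex has at least \<delta> - |P| > 0 neighbours in Q.

   Structure: if R were disconnected, split R into two parts with no edge
   between them.  An edge (u,j)(v,l) across the split forces j = l, so a rich
   vertex whose whole fibre lies in one part pushes the fibres of all its
   neighbours into that part; along the connected, dominating set Q this
   would empty the other part.  Thus every rich vertex has colours in both
   parts, which forces |F(u)| = 2 on Q and makes G[Q] triangle-free.  Then
   for an edge u0 v0 of G[Q] the sets N(u0) - P and N(v0) - P are disjoint,
   each of size \<ge> \<delta> - |P|, and their vertices cost n-2 each; since
   2(n-2) \<ge> n-1 this exceeds the budget |S| = (n-1)\<delta>. *)

lemma min_degree_le_neighbours:
  assumes "finite V" and "u \<in> V"
  shows "min_degree V E \<le> card {v \<in> V. E u v}"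
proof -
  have "Min (degree V E ` V) \<le> degree V E u"
    using assms by (intro Min_le) auto
  then show ?thesis
    unfolding min_degree_def degree_def .
qed

lemma neighbours_outside:
  assumes "finite V" and "P \<subseteq> V" and "u \<in> V"
  shows "min_degree V E - card P \<le> card ({v \<in> V. E u v} - P)"
proof -
  have "card {v \<in> V. E u v} - card P \<le> card ({v \<in> V. E u v} - P)"
    by (rule diff_card_le_card_Diff) (use assms(1,2) finite_subset in auto)
  then show ?thesis
    using min_degree_le_neighbours[OF assms(1,3), of E] by linarith
qed

lemma connected_after_small_removal:
  assumes "finite V" and "P \<subseteq> V" and "card P < vertex_connectivity V E"
  shows "connected_on (V - P) E"
proof (rule ccontr)
  assume disconnected: "\<not> connected_on (V - P) E"
  define cuts where
    "cuts = {card S | S. S \<subseteq> V \<and> (\<not> connected_on (V - S) E \<or> card (V - S) \<le> 1)}"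
  have "card P \<in> cuts"
    unfolding cuts_def using disconnected assms(2) by auto
  moreover have "finite cuts"
    using finite_subset[of cuts "card ` Pow V"] assms(1) unfolding cuts_def by auto
  ultimately have "vertex_connectivity V E \<le> card P"
    unfolding vertex_connectivity_def cuts_def[symmetric] by simp
  with assms(3) show False by simp
qed

lemma small_removal_connected_dominating:
  assumes "finite V" and "P \<subseteq> V" and "card P < min_degree V E"
    and "vertex_connectivity V E = min_degree V E"
  shows "connected_on (V - P) E" and "\<forall>v\<in>V. \<exists>w\<in>V - P. E v w"
proof -
  show "connected_on (V - P) E"
    using connected_after_small_removal[OF assms(1,2)] assms(3,4) by simp
  show "\<forall>v\<in>V. \<exists>w\<in>V - P. E v w"
  proof
    fix v assume "v \<in> V"
    then have "0 < card ({w \<in> V. E v w} - P)"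
      using neighbours_outside[OF assms(1,2), of v E] assms(3) by linarith
    then show "\<exists>w\<in>V - P. E v w"
      by (auto simp: card_gt_0_iff)
  qed
qed

(* X is a union of components of the subgraph induced on R: no edge leaves X
   inside R. *)
definition closed_part :: "('v \<Rightarrow> 'v \<Rightarrow> bool) \<Rightarrow> 'v set \<Rightarrow> 'v set \<Rightarrow> bool" where
  "closed_part H R X \<longleftrightarrow> X \<subseteq> R \<and> (\<forall>p\<in>X. \<forall>q\<in>R - X. \<not> H p q)"

lemma closed_part_complement:
  assumes "symp H" and "closed_part H R X"
  shows "closed_part H R (R - X)"
  using assms unfolding closed_part_def by (auto dest: sympD)

(* A disconnected nonempty vertex set splits into two nonempty closed parts,
   e.g. the component of a vertex and the rest. *)
lemma disconnected_split:
  assumes "R \<noteq> {}" and "\<not> connected_on R H"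
  obtains X where "closed_part H R X" and "X \<noteq> {}" and "R - X \<noteq> {}"
proof -
  define r where "r = (\<lambda>a b. H a b \<and> a \<in> R \<and> b \<in> R)"
  obtain x y where xy: "x \<in> R" "y \<in> R" "\<not> r\<^sup>*\<^sup>* x y"
    using assms unfolding connected_on_def r_def by blast
  define X where "X = {z \<in> R. r\<^sup>*\<^sup>* x z}"
  have "closed_part H R X"
    unfolding closed_part_def X_def
    by (auto simp: r_def intro: rtranclp.rtrancl_into_rtrancl)
  moreover have "x \<in> X" and "y \<in> R - X"
    using xy unfolding X_def by auto
  ultimately show ?thesis
    using that by blast
qed

lemma two_distinct_elements:
  assumes "2 \<le> card A"
  obtains a b where "a \<in> A" and "b \<in> A" and "a \<noteq> b"
proof -
  obtain a where a: "a \<in> A"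
    using assms by fastforce
  have "\<not> A \<subseteq> {a}"
    using card_mono[of "{a}" A] assms by auto
  with a that show ?thesis by blast
qed

section \<open>Splits of a vertex set of G x K_n\<close>

definition fibre :: "('a \<times> 'b) set \<Rightarrow> 'a \<Rightarrow> 'b set" where
  "fibre R u = {j. (u, j) \<in> R}"

lemma symp_kron_K:
  assumes "symp E"
  shows "symp (kron_edges E (K_edges n))"
  using assms unfolding symp_def kron_edges_def K_edges_def by auto

(* An edge of G between the two parts of a split can only join equal colours,
   since distinct colours are adjacent in K_n. *)
lemma cross_edge_same_colour:
  assumes "R \<subseteq> V \<times> K_vertices n"
    and "closed_part (kron_edges E (K_edges n)) R X"
    and "(u, j) \<in> X" and "(v, l) \<in> R - X" and "E u v"
  shows "j = l"
proof (rule ccontr)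
  assume "j \<noteq> l"
  moreover have "j \<in> {1..n}" and "l \<in> {1..n}"
    using assms(1-4) unfolding closed_part_def K_vertices_def by auto
  ultimately have "kron_edges E (K_edges n) (u, j) (v, l)"
    using assms(5) unfolding kron_edges_def K_edges_def by simp
  with assms(2-4) show False
    unfolding closed_part_def by blast
qed

(* A vertex with two colours, all lying in X, forces the fibre of every
   neighbour into X: a colour outside X would equal both colours. *)
lemma full_fibre_spreads:
  assumes "R \<subseteq> V \<times> K_vertices n"
    and "closed_part (kron_edges E (K_edges n)) R X"
    and "2 \<le> card (fibre R u)" and "fibre R u \<subseteq> fibre X u" and "E u v"
  shows "fibre R v \<subseteq> fibre X v"
proof
  fix l assume l: "l \<in> fibre R v"
  show "l \<in> fibre X v"
  proof (rule ccontr)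
    assume "l \<notin> fibre X v"
    then have out: "(v, l) \<in> R - X"
      using l unfolding fibre_def by auto
    obtain a b where "a \<in> fibre R u" "b \<in> fibre R u" "a \<noteq> b"
      using two_distinct_elements[OF assms(3)] by blast
    moreover have "x \<in> fibre R u \<Longrightarrow> x = l" for x
      using cross_edge_same_colour[OF assms(1,2) _ out assms(5)] assms(4)
      unfolding fibre_def by blast
    ultimately show False by metis
  qed
qed

lemma no_full_fibre:
  assumes "symp E" and "R \<subseteq> V \<times> K_vertices n"
    and "closed_part (kron_edges E (K_edges n)) R X" and "R - X \<noteq> {}"
    and "connected_on Q E" and rich: "\<forall>u\<in>Q. 2 \<le> card (fibre R u)"
    and dominating: "\<forall>v\<in>V. \<exists>w\<in>Q. E v w" and "u \<in> Q"
  shows "\<not> fibre R u \<subseteq> fibre X u"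
proof
  assume full: "fibre R u \<subseteq> fibre X u"
  have on_Q: "fibre R w \<subseteq> fibre X w" if "w \<in> Q" for w
  proof -
    have "(\<lambda>a b. E a b \<and> a \<in> Q \<and> b \<in> Q)\<^sup>*\<^sup>* u w"
      using assms(5,8) that unfolding connected_on_def by blast
    then show ?thesis
    proof (induction rule: rtranclp_induct)
      case base
      show ?case using full .
    next
      case (step a b)
      then show ?case
        using full_fibre_spreads[OF assms(2,3)] rich by blast
    qed
  qed
  obtain v l where out: "(v, l) \<in> R - X"
    using assms(4) by auto
  then have "v \<in> V"
    using assms(2) by auto
  then obtain w where "w \<in> Q" and "E w v"
    using dominating assms(1) by (blast dest: sympD)
  then have "fibre R v \<subseteq> fibre X v"
    using full_fibre_spreads[OF assms(2,3)] rich on_Q by blast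
  with out show False
    unfolding fibre_def by auto
qed

lemma rich_fibres_meet_both_parts:
  assumes "symp E" and "R \<subseteq> V \<times> K_vertices n"
    and "closed_part (kron_edges E (K_edges n)) R X" and "X \<noteq> {}" and "R - X \<noteq> {}"
    and "connected_on Q E" and "\<forall>u\<in>Q. 2 \<le> card (fibre R u)"
    and "\<forall>v\<in>V. \<exists>w\<in>Q. E v w" and "u \<in> Q"
  shows "fibre X u \<noteq> {}" and "fibre (R - X) u \<noteq> {}"
proof -
  have X_sub: "X \<subseteq> R"
    using assms(3) unfolding closed_part_def by blast
  have complement: "closed_part (kron_edges E (K_edges n)) R (R - X)"
    using closed_part_complement[OF symp_kron_K[OF assms(1)] assms(3)] .
  have "R - (R - X) \<noteq> {}"
    using assms(4) X_sub by blast
  from no_full_fibre[OF assms(1,2) complement this assms(6-9)]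
  show "fibre X u \<noteq> {}"
    unfolding fibre_def by blast
  from no_full_fibre[OF assms(1-3,5-9)]
  show "fibre (R - X) u \<noteq> {}"
    unfolding fibre_def by blast
qed

(* A neighbour of a vertex with colours on both sides has at most two colours:
   its colours in X and outside X are each determined by that vertex. *)
lemma fibre_le_two:
  assumes "symp E" and "R \<subseteq> V \<times> K_vertices n"
    and "closed_part (kron_edges E (K_edges n)) R X"
    and "fibre X v \<noteq> {}" and "fibre (R - X) v \<noteq> {}" and "E u v"
  shows "card (fibre R u) \<le> 2"
proof -
  obtain l l' where l: "(v, l) \<in> R - X" and l': "(v, l') \<in> X"
    using assms(4,5) unfolding fibre_def by auto
  have "fibre R u \<subseteq> {l, l'}"
  proof
    fix j assume "j \<in> fibre R u"
    then consider "(u, j) \<in> X" | "(u, j) \<in> R - X"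
      unfolding fibre_def by auto
    then show "j \<in> {l, l'}"
    proof cases
      case 1
      then show ?thesis
        using cross_edge_same_colour[OF assms(2,3) _ l assms(6)] by blast
    next
      case 2
      then show ?thesis
        using cross_edge_same_colour[OF assms(2,3) l'] assms(1,6) by (blast dest: sympD)
    qed
  qed
  then have "card (fibre R u) \<le> card {l, l'}"
    by (intro card_mono) auto
  also have "\<dots> \<le> 2"
    by (simp add: card_insert_if)
  finally show ?thesis .
qed

(* Vertices with colours on both sides span no triangle: across an edge the
   colour in X at one end is the colour outside X at the other, and going
   around a triangle would make both colours at one vertex coincide. *)
lemma both_sided_triangle_free:
  assumes "symp E" and "R \<subseteq> V \<times> K_vertices n"
    and split: "closed_part (kron_edges E (K_edges n)) R X"
    and both: "\<And>z. z \<in> {u, v, w} \<Longrightarrow> fibre X z \<noteq> {} \<and> fibre (R - X) z \<noteq> {}"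
    and "E u v" and "E v w" and "E u w"
  shows False
proof -
  have same: "j = l" if "(a, j) \<in> X" "(b, l) \<in> R - X" "E a b" for a b j l
    using cross_edge_same_colour[OF assms(2) split that] .
  obtain xu xv where xu: "(u, xu) \<in> X" and xv: "(v, xv) \<in> X"
    using both[of u] both[of v] unfolding fibre_def by auto
  obtain yu yw where yu: "(u, yu) \<in> R - X" and yw: "(w, yw) \<in> R - X"
    using both[of u] both[of w] unfolding fibre_def by auto
  have "xu = yw" using same[OF xu yw \<open>E u w\<close>] .
  also have "yw = xv" using same[OF xv yw \<open>E v w\<close>] by simp
  also have "xv = yu" using same[OF xv yu] assms(1,5) by (blast dest: sympD)
  finally have "xu = yu" .
  with xu yu show False by simp
qed

lemma disconnected_kron_structure:
  assumes "symp E" and "R \<subseteq> V \<times> K_vertices n"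
    and "\<not> connected_on R (kron_edges E (K_edges n))"
    and "Q \<subseteq> V" and "connected_on Q E" and rich: "\<forall>u\<in>Q. 2 \<le> card (fibre R u)"
    and dominating: "\<forall>v\<in>V. \<exists>w\<in>Q. E v w"
  obtains u0 v0 where "u0 \<in> Q" and "v0 \<in> Q" and "E u0 v0"
    and "{v \<in> Q. E u0 v} \<inter> {v \<in> Q. E v0 v} = {}"
    and "\<forall>u\<in>Q. card (fibre R u) \<le> 2"
proof -
  obtain u0 where u0: "u0 \<in> Q"
    using assms(5) unfolding connected_on_def by blast
  have "fibre R u0 \<noteq> {}"
    using rich u0 by (metis card.empty not_numeral_le_zero)
  then have "R \<noteq> {}"
    unfolding fibre_def by blast
  then obtain X where split: "closed_part (kron_edges E (K_edges n)) R X" "X \<noteq> {}" "R - X \<noteq> {}"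
    using disconnected_split[OF _ assms(3)] by blast
  have both: "fibre X u \<noteq> {} \<and> fibre (R - X) u \<noteq> {}" if "u \<in> Q" for u
    using rich_fibres_meet_both_parts[OF assms(1,2) split assms(5) rich dominating that] by blast
  have le_two: "\<forall>u\<in>Q. card (fibre R u) \<le> 2"
  proof
    fix u assume "u \<in> Q"
    then obtain v where "v \<in> Q" and "E u v"
      using dominating assms(4) by blast
    then show "card (fibre R u) \<le> 2"
      using fibre_le_two[OF assms(1,2) split(1)] both by blast
  qed
  obtain v0 where v0: "v0 \<in> Q" "E u0 v0"
    using u0 dominating assms(4) by blast
  have "{v \<in> Q. E u0 v} \<inter> {v \<in> Q. E v0 v} = {}"
  proof (rule ccontr)
    assume "{v \<in> Q. E u0 v} \<inter> {v \<in> Q. E v0 v} \<noteq> {}"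
    then obtain w where "w \<in> Q" "E u0 w" "E v0 w"
      by blast
    then show False
      using both_sided_triangle_free[OF assms(1,2) split(1), of u0 v0 w] both u0 v0 by blast
  qed
  with u0 v0 le_two that show ?thesis
    by blast
qed

section \<open>Counting removed vertices\<close>

lemma card_as_fibre_sum:
  assumes "finite V" and "finite B" and "S \<subseteq> V \<times> B"
  shows "card S = (\<Sum>u\<in>V. card (fibre S u))"
proof -
  have "S = (SIGMA u:V. fibre S u)"
    using assms(3) unfolding fibre_def by auto
  moreover have "\<forall>u\<in>V. finite (fibre S u)"
    using assms(2,3) finite_subset[of "fibre S _" B] unfolding fibre_def by auto
  ultimately show ?thesis
    using card_SigmaI[OF assms(1), of "fibre S"] by simp
qed

lemma fibre_card_complement:
  assumes "S \<subseteq> V \<times> K_vertices n" and "u \<in> V"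
  shows "card (fibre S u) + card (fibre (V \<times> K_vertices n - S) u) = n"
proof -
  have "fibre S u \<union> fibre (V \<times> K_vertices n - S) u = K_vertices n"
    and "fibre S u \<inter> fibre (V \<times> K_vertices n - S) u = {}"
    using assms unfolding fibre_def by auto
  then show ?thesis
    using card_Un_disjoint[of "fibre S u" "fibre (V \<times> K_vertices n - S) u"]
    unfolding K_vertices_def by (metis card_atLeastAtMost diff_Suc_1 finite_Un finite_atLeastAtMost)
qed

lemma poor_vertices_cost:
  fixes c :: "'a \<Rightarrow> nat"
  assumes "finite P" and "w \<in> P" and "n \<le> c w" and "\<forall>u\<in>P. n - 1 \<le> c u" and "1 \<le> n"
  shows "(n - 1) * card P + 1 \<le> (\<Sum>u\<in>P. c u)"
proof -
  have "(n - 1) * card (P - {w}) \<le> (\<Sum>u\<in>P - {w}. c u)"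
    using sum_bounded_below[of "P - {w}" "n - 1" c] assms(4) by (simp add: mult.commute)
  moreover have "(n - 1) * card P + 1 = (n - 1) * card (P - {w}) + n"
  proof -
    obtain k where "card P = Suc k" and "card (P - {w}) = k"
      using assms(1,2) by (metis card.remove)
    then show ?thesis
      using assms(5) by (cases n) auto
  qed
  moreover have "(\<Sum>u\<in>P. c u) = c w + (\<Sum>u\<in>P - {w}. c u)"
    using assms(1,2) by (simp add: sum.remove)
  ultimately show ?thesis
    using assms(3) by linarith
qed

(* The final estimate: besides the poor vertices P, two disjoint sets of
   at least \<delta> - |P| vertices costing n-2 each exceed the budget (n-1)\<delta>,
   because 2(n-2) \<ge> n-1 for n \<ge> 3. *)
lemma split_exceeds_budget:
  fixes c :: "'a \<Rightarrow> nat"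
  assumes "finite V" and "P \<subseteq> V" and "w \<in> P" and "n \<le> c w"
    and "\<forall>u\<in>P. n - 1 \<le> c u"
    and "N1 \<subseteq> V - P" and "N2 \<subseteq> V - P" and "N1 \<inter> N2 = {}"
    and rich: "\<forall>u\<in>V - P. n - 2 \<le> c u"
    and "\<delta> - card P \<le> card N1" and "\<delta> - card P \<le> card N2" and "3 \<le> n"
  shows "(n - 1) * \<delta> < (\<Sum>u\<in>V. c u)"
proof -
  define t where "t = \<delta> - card P"
  have fin: "finite N1" "finite N2" "finite P"
    using assms(1,2,6,7) finite_subset by blast+
  have poor: "(n - 1) * card P + 1 \<le> (\<Sum>u\<in>P. c u)"
    using poor_vertices_cost[OF fin(3) assms(3-5)] assms(12) by simp
  have "(n - 1) * t \<le> (n - 2) * card N1 + (n - 2) * card N2"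
  proof -
    have "(n - 1) * t \<le> (n - 2) * t + (n - 2) * t"
    proof -
      have "n - 1 \<le> (n - 2) + (n - 2)"
        using assms(12) by linarith
      then show ?thesis
        by (metis add_mult_distrib mult_right_mono mult.commute zero_le)
    qed
    also have "\<dots> \<le> (n - 2) * card N1 + (n - 2) * card N2"
      using assms(10,11) unfolding t_def by (intro add_mono mult_left_mono) auto
    finally show ?thesis .
  qed
  also have "\<dots> \<le> (\<Sum>u\<in>N1. c u) + (\<Sum>u\<in>N2. c u)"
  proof (intro add_mono)
    show "(n - 2) * card N1 \<le> (\<Sum>u\<in>N1. c u)"
      using sum_bounded_below[of N1 "n - 2" c] rich assms(6) by (auto simp: mult.commute)
    show "(n - 2) * card N2 \<le> (\<Sum>u\<in>N2. c u)"
      using sum_bounded_below[of N2 "n - 2" c] rich assms(7) by (auto simp: mult.commute)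
  qed
  finally have rest: "(n - 1) * t \<le> (\<Sum>u\<in>N1. c u) + (\<Sum>u\<in>N2. c u)" .
  have "(n - 1) * \<delta> \<le> (n - 1) * card P + (n - 1) * t"
    unfolding t_def add_mult_distrib2[symmetric] by (intro mult_left_mono) auto
  then have "(n - 1) * \<delta> < (\<Sum>u\<in>P. c u) + ((\<Sum>u\<in>N1. c u) + (\<Sum>u\<in>N2. c u))"
    using poor rest by linarith
  also have "\<dots> = (\<Sum>u\<in>P \<union> (N1 \<union> N2). c u)"
  proof -
    have "P \<inter> (N1 \<union> N2) = {}"
      using assms(6,7) by blast
    then show ?thesis
      using fin assms(8) by (simp add: sum.union_disjoint)
  qed
  also have "\<dots> \<le> (\<Sum>u\<in>V. c u)"
    using assms(1,2,6,7) by (intro sum_mono2) auto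
  finally show ?thesis .
qed

lemma few_poor_vertices:
  fixes c :: "'a \<Rightarrow> nat"
  assumes "finite V" and "P \<subseteq> V" and "w \<in> P" and "n \<le> c w"
    and "\<forall>u\<in>P. n - 1 \<le> c u" and "1 \<le> n" and "(\<Sum>u\<in>V. c u) = (n - 1) * \<delta>"
  shows "card P < \<delta>"
proof -
  have "(n - 1) * card P + 1 \<le> (\<Sum>u\<in>P. c u)"
    using poor_vertices_cost[OF finite_subset[OF assms(2,1)] assms(3-6)] .
  also have "\<dots> \<le> (\<Sum>u\<in>V. c u)"
    using assms(1,2) by (intro sum_mono2) auto
  finally have "(n - 1) * card P < (n - 1) * \<delta>"
    using assms(7) by linarith
  then show ?thesis
    by (simp add: mult_less_cancel1)
qed

theorem mainTheorem5:
  fixes V :: "'a set" and E :: "'a \<Rightarrow> 'a \<Rightarrow> bool"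
    and n :: nat and S :: "('a \<times> nat) set"
  assumes "simple_graph V E"
    and "connected_on V E"
    and "card V \<ge> 2"
    and "vertex_connectivity V E = min_degree V E"
    and "min_degree V E > 0"
    and "n \<ge> 3"
    and "S \<subseteq> V \<times> K_vertices n"
    and "card S = (n - 1) * min_degree V E"
    and "\<exists>u\<in>V. {u} \<times> K_vertices n \<subseteq> S"
  shows "connected_on (V \<times> K_vertices n - S) (kron_edges E (K_edges n))"
proof (rule ccontr)
  assume disconnected: "\<not> ?thesis"
  define R where "R = V \<times> K_vertices n - S"
  define c where "c u = card (fibre S u)" for u
  define P where "P = {u \<in> V. card (fibre R u) \<le> 1}"
  have fin: "finite V" and sym: "symp E"
    using assms(1) unfolding simple_graph_def symp_def by auto
  have cost: "c u = n - card (fibre R u)" if "u \<in> V" for u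
    using fibre_card_complement[OF assms(7) that] unfolding c_def R_def by simp
  have budget: "(\<Sum>u\<in>V. c u) = (n - 1) * min_degree V E"
    using card_as_fibre_sum[OF fin _ assms(7)] assms(8) unfolding c_def K_vertices_def by simp
  obtain w where w: "w \<in> V" "fibre R w = {}"
    using assms(9) unfolding R_def fibre_def by auto
  have poor: "w \<in> P" "n \<le> c w" "\<forall>u\<in>P. n - 1 \<le> c u"
    using w cost unfolding P_def by auto
  have PV: "P \<subseteq> V"
    unfolding P_def by blast
  have few: "card P < min_degree V E"
    using few_poor_vertices[OF fin PV poor] assms(6) budget by auto
  note Q = small_removal_connected_dominating[OF fin PV few assms(4)]
  have rich: "\<forall>u\<in>V - P. 2 \<le> card (fibre R u)"
    unfolding P_def by auto
  obtain u0 v0 where u0v0: "u0 \<in> V - P" "v0 \<in> V - P" "E u0 v0"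
      "{v \<in> V - P. E u0 v} \<inter> {v \<in> V - P. E v0 v} = {}" "\<forall>u\<in>V - P. card (fibre R u) \<le> 2"
    using disconnected_kron_structure[OF sym _ _ _ Q(1) rich Q(2)] disconnected
    unfolding R_def by blast
  have "\<forall>u\<in>V - P. n - 2 \<le> c u"
    using u0v0(5) cost by (simp add: diff_le_mono2)
  then have "(n - 1) * min_degree V E < (\<Sum>u\<in>V. c u)"
    using split_exceeds_budget[OF fin PV poor, of "{v \<in> V. E u0 v} - P" "{v \<in> V. E v0 v} - P"]
      neighbours_outside[OF fin PV] u0v0(1,2,4) assms(6) by blast
  with budget show False
    by simp
qed

end
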